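(* Let $H$ be a finite subgroup of a group $G$, and suppose that $A\subseteq aH\cup bH$, where $a,b\in G$ are elements with $a^{-1}b\in N(H)$ and $(a^{-1}b)^2\notin H$. If $|A|>\frac95\,|H|$, then $|A^{-1}A|<\frac53\,|A|$; moreover, in this case $A^{-1}A$ is a disjoint union of $H$ and two double $H$-cosets (sets of the form $HgH$, $g\in G$), each of size $|H|$.
   Context: $A^{-1}A=\{a_1^{-1}a_2\colon a_1,a_2\in A\}$. For a subgroup $H\le G$, $N(H)=\{g\in G\colon gH=Hg\}$ denotes its normalizer. *)

theory Defs
  imports Complex_Main "HOL-Algebra.Coset" "HOL-Algebra.Group_Action"
begin

definition normalizer_lr :: "('a, 'b) monoid_scheme \<Rightarrow> 'a set \<Rightarrow> 'a set" where
  "normalizer_lr G H = {g \<in> carrier G. g <#\<^bsub>G\<^esub> H = H #>\<^bsub>G\<^esub> g}"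

definition double_coset :: "('a, 'b) monoid_scheme \<Rightarrow> 'a set \<Rightarrow> 'a \<Rightarrow> 'a set" where
  "double_coset G H g = H <#>\<^bsub>G\<^esub> (g <#\<^bsub>G\<^esub> H)"

end

theory Submission
  imports Defs
begin

text \<open>
  Put \<open>g = a\<inverse> b\<close>.  As \<open>g \<notin> H\<close>, the cosets \<open>aH\<close> and \<open>bH\<close> are disjoint, so
  \<open>|A| > 9/5 |H|\<close> forces both \<open>A \<inter> aH\<close> and \<open>A \<inter> bH\<close> to have more than \<open>|H|/2\<close>
  elements.  Now if \<open>P \<subseteq> xH\<close>, \<open>Q \<subseteq> yH\<close>, \<open>x\<inverse> y\<close> normalises \<open>H\<close> and
  \<open>|P| + |Q| > |H|\<close>, then \<open>P\<inverse>Q = x\<inverse> y H\<close>: for \<open>c \<in> x\<inverse> y H\<close> right multiplication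
  by \<open>c\<close> maps \<open>xH\<close> onto \<open>yH\<close>, so by pigeonhole \<open>Pc\<close> meets \<open>Q\<close>.  Applying this to
  the four pairs of pieces of \<open>A\<close> gives \<open>A\<inverse>A = H \<union> gH \<union> g\<inverse>H\<close>; these cosets are
  distinct because \<open>g, g\<^sup>2 \<notin> H\<close>, and each equals its double coset because \<open>g\<close>
  normalises \<open>H\<close>.  Hence \<open>|A\<inverse>A| = 3|H| < 5/3 |A|\<close>.
\<close>

lemma Int_nonempty_if_card_sum_gt:
  assumes "finite S" "P \<subseteq> S" "Q \<subseteq> S" "card S < card P + card Q"
  shows "P \<inter> Q \<noteq> {}"
proof -
  have "card P + card Q = card (P \<union> Q) + card (P \<inter> Q)"
    using assms by (intro card_Un_Int) (auto intro: finite_subset)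
  moreover have "card (P \<union> Q) \<le> card S"
    using assms by (intro card_mono) auto
  ultimately show ?thesis
    using assms(4) by auto
qed

lemma set_inv_Un: "set_inv\<^bsub>G\<^esub> (P \<union> Q) = set_inv\<^bsub>G\<^esub> P \<union> set_inv\<^bsub>G\<^esub> Q"
  by (auto simp: SET_INV_def)

lemma mono_set_inv: "P \<subseteq> Q \<Longrightarrow> set_inv\<^bsub>G\<^esub> P \<subseteq> set_inv\<^bsub>G\<^esub> Q"
  by (auto simp: SET_INV_def)

lemma set_mult_Un_left: "(P \<union> Q) <#>\<^bsub>G\<^esub> R = (P <#>\<^bsub>G\<^esub> R) \<union> (Q <#>\<^bsub>G\<^esub> R)"
  by (auto simp: set_mult_def)

lemma set_mult_Un_right: "R <#>\<^bsub>G\<^esub> (P \<union> Q) = (R <#>\<^bsub>G\<^esub> P) \<union> (R <#>\<^bsub>G\<^esub> Q)"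
  by (auto simp: set_mult_def)

context group
begin

lemma finite_l_coset: "finite H \<Longrightarrow> finite (x <# H)"
  by (simp add: l_coset_def)

lemma card_l_coset:
  assumes "subgroup H G" "x \<in> carrier G"
  shows "card (x <# H) = card H"
proof -
  have "x <# H = (\<otimes>) x ` H"
    by (auto simp: l_coset_def)
  moreover have "inj_on ((\<otimes>) x) H"
    using assms by (auto simp: inj_on_def subgroup.mem_carrier)
  ultimately show ?thesis
    by (simp add: card_image)
qed

lemma l_cosets_disjoint:
  assumes "subgroup H G" "x \<in> carrier G" "y \<in> carrier G" "inv x \<otimes> y \<notin> H"
  shows "(x <# H) \<inter> (y <# H) = {}"
proof (rule ccontr)
  assume "(x <# H) \<inter> (y <# H) \<noteq> {}"
  then obtain h1 h2 where h: "h1 \<in> H" "h2 \<in> H" "x \<otimes> h1 = y \<otimes> h2"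
    by (auto simp: l_coset_def)
  have hc: "h1 \<in> carrier G" "h2 \<in> carrier G"
    using h(1,2) subgroup.mem_carrier[OF assms(1)] by auto
  have "inv x \<otimes> y = inv x \<otimes> (y \<otimes> h2) \<otimes> inv h2"
    using hc assms(2,3) by (simp add: m_assoc)
  also have "\<dots> = h1 \<otimes> inv h2"
    using hc assms(2,3) by (simp add: h(3)[symmetric] m_assoc[symmetric])
  finally show False
    using assms(1,4) h(1,2) by (metis subgroup.m_closed subgroup.m_inv_closed)
qed

lemma subgroup_Int_l_coset:
  assumes "subgroup H G" "g \<in> carrier G" "g \<notin> H"
  shows "H \<inter> (g <# H) = {}"
  using l_cosets_disjoint[of H \<one> g] assms by (simp add: lcos_mult_one subgroup.subset)

lemma card_Int_two_l_cosets:
  assumes HG: "subgroup H G" and "finite H"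
    and a: "a \<in> carrier G" and b: "b \<in> carrier G" and "inv a \<otimes> b \<notin> H"
    and A: "A \<subseteq> (a <# H) \<union> (b <# H)"
  shows "card A = card (A \<inter> (a <# H)) + card (A \<inter> (b <# H))"
proof -
  have "A = (A \<inter> (a <# H)) \<union> (A \<inter> (b <# H))"
    using A by auto
  moreover have "(A \<inter> (a <# H)) \<inter> (A \<inter> (b <# H)) = {}"
    using l_cosets_disjoint[OF HG a b \<open>inv a \<otimes> b \<notin> H\<close>] by auto
  ultimately show ?thesis
    using \<open>finite H\<close> by (metis card_Un_disjoint finite_Int finite_l_coset)
qed

lemma l_cosets_disjoint_if_square_notin:
  assumes HG: "subgroup H G" and g: "g \<in> carrier G" and "g \<otimes> g \<notin> H"
  shows "H \<inter> (g <# H) = {}" "H \<inter> (inv g <# H) = {}" "(g <# H) \<inter> (inv g <# H) = {}"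
proof -
  have "g \<notin> H"
    using assms(3) subgroup.m_closed[OF HG] by blast
  moreover have "inv g \<notin> H"
    using \<open>g \<notin> H\<close> g subgroup.m_inv_closed[OF HG] by fastforce
  moreover have "inv g \<otimes> inv g \<notin> H"
    using assms(3) g subgroup.m_inv_closed[OF HG] by (fastforce simp: inv_mult_group[symmetric])
  ultimately show "H \<inter> (g <# H) = {}" "H \<inter> (inv g <# H) = {}" "(g <# H) \<inter> (inv g <# H) = {}"
    using HG g by (simp_all add: subgroup_Int_l_coset l_cosets_disjoint)
qed

lemma set_inv_l_coset:
  assumes "subgroup H G" "x \<in> carrier G"
  shows "set_inv (x <# H) = H #> inv x"
proof -
  have "inv (x \<otimes> h) = inv h \<otimes> inv x" if "h \<in> H" for h
    using that assms by (simp add: inv_mult_group subgroup.mem_carrier)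
  moreover have "h \<otimes> inv x = inv (x \<otimes> inv h)" if "h \<in> H" for h
    using that assms by (simp add: inv_mult_group subgroup.mem_carrier)
  ultimately show ?thesis
    using assms(1) unfolding SET_INV_def l_coset_def r_coset_def
    by (auto intro: subgroup.m_inv_closed)
qed

lemma set_inv_l_coset_mult_l_coset:
  assumes "subgroup H G" "x \<in> carrier G" "y \<in> carrier G"
  shows "set_inv (x <# H) <#> (y <# H) = double_coset G H (inv x \<otimes> y)"
proof -
  have HG: "H \<subseteq> carrier G"
    using assms(1) subgroup.subset by blast
  have "set_inv (x <# H) <#> (y <# H) = (H <#> {inv x}) <#> ({y} <#> H)"
    using set_inv_l_coset[OF assms(1,2)] by (simp add: r_coset_eq_set_mult l_coset_eq_set_mult)
  also have "\<dots> = H <#> ({inv x} <#> ({y} <#> H))"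
    using HG assms by (simp add: set_mult_assoc setmult_subset_G)
  also have "\<dots> = H <#> (({inv x} <#> {y}) <#> H)"
    using HG assms by (simp add: set_mult_assoc)
  also have "{inv x} <#> {y} = {inv x \<otimes> y}"
    by (simp add: set_mult_def)
  finally show ?thesis
    by (simp add: double_coset_def l_coset_eq_set_mult)
qed

lemma normalizer_lr_one: "subgroup H G \<Longrightarrow> \<one> \<in> normalizer_lr G H"
  by (simp add: normalizer_lr_def lcos_mult_one subgroup.subset)

lemma normalizer_lr_inv:
  assumes "subgroup H G" "g \<in> normalizer_lr G H"
  shows "inv g \<in> normalizer_lr G H"
proof -
  have HG: "H \<subseteq> carrier G" and g: "g \<in> carrier G" "g <# H = H #> g"
    using assms by (auto simp: normalizer_lr_def subgroup.subset)
  have "H #> inv g = inv g <# (g <# H) #> inv g"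
    using HG g(1) by (simp add: lcos_m_assoc lcos_mult_one)
  also have "\<dots> = inv g <# (H #> g) #> inv g"
    by (simp only: g(2))
  also have "\<dots> = inv g <# H"
    using HG g(1) by (simp add: coset_assoc coset_mult_assoc l_coset_subset_G)
  finally show ?thesis
    using g by (simp add: normalizer_lr_def)
qed

lemma double_coset_normalizer:
  assumes "subgroup H G" "g \<in> normalizer_lr G H"
  shows "double_coset G H g = g <# H"
proof -
  have HG: "H \<subseteq> carrier G" and g: "g \<in> carrier G" "g <# H = H #> g"
    using assms by (auto simp: normalizer_lr_def subgroup.subset)
  have "double_coset G H g = (H <#> H) <#> {g}"
    using HG g by (simp add: double_coset_def r_coset_eq_set_mult set_mult_assoc)
  then show ?thesis
    using assms(1) g by (simp add: subgroup_mult_id r_coset_eq_set_mult)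
qed

lemma l_coset_r_coset_normalizer:
  assumes "subgroup H G" "g \<in> normalizer_lr G H" "x \<in> carrier G" "c \<in> g <# H"
  shows "(x <# H) #> c = (x \<otimes> g) <# H"
proof -
  have HG: "H \<subseteq> carrier G" and g: "g \<in> carrier G" "g <# H = H #> g"
    using assms by (auto simp: normalizer_lr_def subgroup.subset)
  obtain h where h: "h \<in> H" "c = g \<otimes> h"
    using assms(4) by (auto simp: l_coset_def)
  have xH: "x <# H \<subseteq> carrier G"
    using HG assms(3) by (rule l_coset_subset_G)
  have "(x <# H) #> c = x <# (H #> g) #> h"
    using xH HG g(1) h assms(1,3) by (simp add: coset_mult_assoc coset_assoc subgroup.mem_carrier)
  also have "\<dots> = (x \<otimes> g) <# H #> h"
    using HG g(1) assms(3) by (simp add: g(2)[symmetric] lcos_m_assoc)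
  also have "\<dots> = (x \<otimes> g) <# (H #> h)"
    using HG g(1) h assms(1,3) by (simp add: coset_assoc subgroup.mem_carrier)
  also have "H #> h = H"
    using assms(1) h(1) by (simp add: subgroup.rcos_const is_group)
  finally show ?thesis .
qed

lemma set_inv_mult_eq_l_coset_if_card_gt:
  assumes HG: "subgroup H G" and "finite H"
    and x: "x \<in> carrier G" and y: "y \<in> carrier G"
    and N: "inv x \<otimes> y \<in> normalizer_lr G H"
    and P: "P \<subseteq> x <# H" and Q: "Q \<subseteq> y <# H"
    and large: "card H < card P + card Q"
  shows "set_inv P <#> Q = (inv x \<otimes> y) <# H"
proof
  have "set_inv P <#> Q \<subseteq> set_inv (x <# H) <#> (y <# H)"
    using P Q by (intro mono_set_mult mono_set_inv)
  also have "\<dots> = (inv x \<otimes> y) <# H"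
    using HG x y N by (simp add: set_inv_l_coset_mult_l_coset double_coset_normalizer)
  finally show "set_inv P <#> Q \<subseteq> (inv x \<otimes> y) <# H" .
next
  show "(inv x \<otimes> y) <# H \<subseteq> set_inv P <#> Q"
  proof
    fix c assume c: "c \<in> (inv x \<otimes> y) <# H"
    have cG: "c \<in> carrier G"
      using c x y HG by (meson l_coset_carrier m_closed inv_closed)
    have PG: "P \<subseteq> carrier G"
      using P x HG l_coset_subset_G subgroup.subset by blast
    have "(x <# H) #> c = y <# H"
      using l_coset_r_coset_normalizer[OF HG N x c] x y by (simp add: m_assoc[symmetric])
    then have "(\<lambda>p. p \<otimes> c) ` P \<subseteq> y <# H"
      using P by (auto simp: r_coset_def)
    moreover have "card ((\<lambda>p. p \<otimes> c) ` P) = card P"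
      using PG cG by (simp add: card_image inj_on_g)
    ultimately have "(\<lambda>p. p \<otimes> c) ` P \<inter> Q \<noteq> {}"
      using Q large \<open>finite H\<close> HG y
      by (intro Int_nonempty_if_card_sum_gt[of "y <# H"]) (simp_all add: finite_l_coset card_l_coset)
    then obtain p where p: "p \<in> P" "p \<otimes> c \<in> Q"
      by blast
    moreover have "c = inv p \<otimes> (p \<otimes> c)"
      using p PG cG by (auto simp: m_assoc[symmetric])
    ultimately show "c \<in> set_inv P <#> Q"
      by (auto simp: set_mult_def SET_INV_def)
  qed
qed

lemma set_inv_mult_self_eq_subgroup_if_card_gt:
  assumes "subgroup H G" "finite H" "x \<in> carrier G" "P \<subseteq> x <# H" "card H < 2 * card P"
  shows "set_inv P <#> P = H"
  using set_inv_mult_eq_l_coset_if_card_gt[of H x x P P] assms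
  by (simp add: normalizer_lr_one lcos_mult_one subgroup.subset)

lemma set_inv_mult_self_two_cosets:
  assumes HG: "subgroup H G" and "finite H"
    and a: "a \<in> carrier G" and b: "b \<in> carrier G"
    and N: "inv a \<otimes> b \<in> normalizer_lr G H"
    and A: "A \<subseteq> (a <# H) \<union> (b <# H)"
    and large: "card H < 2 * card (A \<inter> (a <# H))" "card H < 2 * card (A \<inter> (b <# H))"
  shows "set_inv A <#> A = H \<union> ((inv a \<otimes> b) <# H) \<union> ((inv b \<otimes> a) <# H)"
proof -
  define Pa where "Pa = A \<inter> (a <# H)"
  define Pb where "Pb = A \<inter> (b <# H)"
  have A_split: "A = Pa \<union> Pb"
    using A by (auto simp: Pa_def Pb_def)
  have N': "inv b \<otimes> a \<in> normalizer_lr G H"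
    using normalizer_lr_inv[OF HG N] a b by (simp add: inv_mult_group)
  have "set_inv Pa <#> Pb = (inv a \<otimes> b) <# H"
    using large a b by (intro set_inv_mult_eq_l_coset_if_card_gt[OF HG \<open>finite H\<close> a b N]) (auto simp: Pa_def Pb_def)
  moreover have "set_inv Pb <#> Pa = (inv b \<otimes> a) <# H"
    using large a b by (intro set_inv_mult_eq_l_coset_if_card_gt[OF HG \<open>finite H\<close> b a N']) (auto simp: Pa_def Pb_def)
  moreover have "set_inv Pa <#> Pa = H"
    using large(1) by (intro set_inv_mult_self_eq_subgroup_if_card_gt[OF HG \<open>finite H\<close> a]) (auto simp: Pa_def)
  moreover have "set_inv Pb <#> Pb = H"
    using large(2) by (intro set_inv_mult_self_eq_subgroup_if_card_gt[OF HG \<open>finite H\<close> b]) (auto simp: Pb_def)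
  ultimately show ?thesis
    unfolding A_split by (auto simp: set_inv_Un set_mult_Un_left set_mult_Un_right)
qed

end

theorem proposition3p1:
  fixes G :: "('a, 'b) monoid_scheme" and H A :: "'a set" and a b :: 'a
  assumes "group G"
    and "subgroup H G"
    and "finite H"
    and "a \<in> carrier G" and "b \<in> carrier G"
    and "A \<subseteq> (a <#\<^bsub>G\<^esub> H) \<union> (b <#\<^bsub>G\<^esub> H)"
    and "inv\<^bsub>G\<^esub> a \<otimes>\<^bsub>G\<^esub> b \<in> normalizer_lr G H"
    and "(inv\<^bsub>G\<^esub> a \<otimes>\<^bsub>G\<^esub> b) [^]\<^bsub>G\<^esub> (2::nat) \<notin> H"
    and "real (card A) > 9/5 * real (card H)"
  shows "real (card ((set_inv\<^bsub>G\<^esub> A) <#>\<^bsub>G\<^esub> A)) < 5/3 * real (card A)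
     \<and> (\<exists>g1 \<in> carrier G. \<exists>g2 \<in> carrier G.
          (set_inv\<^bsub>G\<^esub> A) <#>\<^bsub>G\<^esub> A = H \<union> double_coset G H g1 \<union> double_coset G H g2
        \<and> H \<inter> double_coset G H g1 = {}
        \<and> H \<inter> double_coset G H g2 = {}
        \<and> double_coset G H g1 \<inter> double_coset G H g2 = {}
        \<and> card (double_coset G H g1) = card H
        \<and> card (double_coset G H g2) = card H)"
proof -
  interpret group G by fact
  define g where "g = inv\<^bsub>G\<^esub> a \<otimes>\<^bsub>G\<^esub> b"
  have g: "g \<in> carrier G" "inv\<^bsub>G\<^esub> g = inv\<^bsub>G\<^esub> b \<otimes>\<^bsub>G\<^esub> a"
    using assms(4,5) by (simp_all add: g_def inv_mult_group)
  have square: "g \<otimes>\<^bsub>G\<^esub> g \<notin> H"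
    using assms(8) g(1) by (simp add: g_def[symmetric] numeral_2_eq_2)
  note disjoint = l_cosets_disjoint_if_square_notin[OF assms(2) g(1) square]
  have "g \<notin> H"
    using square subgroup.m_closed[OF assms(2)] by blast
  then have "card A = card (A \<inter> (a <#\<^bsub>G\<^esub> H)) + card (A \<inter> (b <#\<^bsub>G\<^esub> H))"
    using card_Int_two_l_cosets[OF assms(2-5) _ assms(6)] by (simp add: g_def)
  moreover have "card (A \<inter> (x <#\<^bsub>G\<^esub> H)) \<le> card H" if "x \<in> carrier G" for x
    using assms(2,3) that by (metis card_l_coset card_mono finite_l_coset inf_le2)
  moreover have "9 * card H < 5 * card A"
    using assms(9) by (simp flip: of_nat_less_iff)
  ultimately have large: "card H < 2 * card (A \<inter> (a <#\<^bsub>G\<^esub> H))" "card H < 2 * card (A \<inter> (b <#\<^bsub>G\<^esub> H))"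
    using assms(4,5) by fastforce+
  have AA: "set_inv\<^bsub>G\<^esub> A <#>\<^bsub>G\<^esub> A = H \<union> (g <#\<^bsub>G\<^esub> H) \<union> (inv\<^bsub>G\<^esub> g <#\<^bsub>G\<^esub> H)"
    using set_inv_mult_self_two_cosets[OF assms(2-5,7,6) large] g(2) by (simp add: g_def)
  have "g \<in> normalizer_lr G H" "inv\<^bsub>G\<^esub> g \<in> normalizer_lr G H"
    using assms(2,7) normalizer_lr_inv by (simp_all add: g_def)
  then have "double_coset G H g = g <#\<^bsub>G\<^esub> H" "double_coset G H (inv\<^bsub>G\<^esub> g) = inv\<^bsub>G\<^esub> g <#\<^bsub>G\<^esub> H"
    using assms(2) by (simp_all add: double_coset_normalizer)
  moreover have "card (set_inv\<^bsub>G\<^esub> A <#>\<^bsub>G\<^esub> A) = 3 * card H"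
    using AA disjoint assms(2,3) g(1) by (simp add: card_Un_disjoint finite_l_coset card_l_coset Int_Un_distrib2)
  ultimately show ?thesis
    using AA disjoint g(1) assms(2,9)
    by (intro conjI bexI[of _ g] bexI[of _ "inv\<^bsub>G\<^esub> g"]) (simp_all add: card_l_coset)
qed

end
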